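(* Let $I$ be a compact non-degenerate interval and let $f:I\to\mathbb{R}$ be continuous. If the graph $\{(x,f(x)):x\in I\}\subseteq\mathbb{R}^2$ is $1$-monotone, then $f$ is of bounded variation.
   Context: A metric space $(X,d)$ is $c$-monotone ($c>0$) if there is a linear order $<$ on $X$ such that $d(x,y)\le c\,d(x,z)$ whenever $x<y<z$ in $X$. The graph carries the Euclidean metric of $\mathbb{R}^2$. *)

theory Defs
  imports "HOL-Analysis.Analysis"
begin

definition strict_linear_order_on :: "'a set \<Rightarrow> ('a \<Rightarrow> 'a \<Rightarrow> bool) \<Rightarrow> bool" where
  "strict_linear_order_on X R \<longleftrightarrow>
     (\<forall>x\<in>X. \<not> R x x) \<and>
     (\<forall>x\<in>X. \<forall>y\<in>X. \<forall>z\<in>X. R x y \<and> R y z \<longrightarrow> R x z) \<and>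
     (\<forall>x\<in>X. \<forall>y\<in>X. x \<noteq> y \<longrightarrow> R x y \<or> R y x)"

definition c_monotone :: "real \<Rightarrow> 'a::metric_space set \<Rightarrow> bool" where
  "c_monotone c X \<longleftrightarrow>
     (\<exists>R. strict_linear_order_on X R \<and>
        (\<forall>x\<in>X. \<forall>y\<in>X. \<forall>z\<in>X. R x y \<and> R y z \<longrightarrow> dist x y \<le> c * dist x z))"

definition bounded_variation_on :: "(real \<Rightarrow> real) \<Rightarrow> real \<Rightarrow> real \<Rightarrow> bool" where
  "bounded_variation_on f a b \<longleftrightarrow>
     (\<exists>M. \<forall>n. \<forall>t :: nat \<Rightarrow> real.
        t 0 = a \<and> t n = b \<and> (\<forall>i<n. t i < t (Suc i)) \<longrightarrow>
        (\<Sum>i<n. \<bar>f (t (Suc i)) - f (t i)\<bar>) \<le> M)"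

text \<open>Graph of f over I as a subset of the Euclidean plane; real \<times> real carries
dist ((x1,y1),(x2,y2)) = sqrt((x1-x2)^2 + (y1-y2)^2), the Euclidean metric.\<close>

definition graph_on :: "real set \<Rightarrow> (real \<Rightarrow> real) \<Rightarrow> (real \<times> real) set" where
  "graph_on I f = {(x, f x) | x. x \<in> I}"

end

theory Submission
  imports Defs
begin

text \<open>For a 1-monotone order on the graph and a point v of it, the points after v and the points
before v form two relatively open sets: a point close to one lying after v cannot lie before v
without being closer to v than the triangle inequality allows. The graph of a continuous function
is an arc, so connectedness makes the order agree with the order of the abscissae or its reverse;
reflecting the interval reduces the second case to the first.

Then for s < x < y the point (x, f x) is at most as far from (s, f s) as (y, f y) is. If the graph
descends by D > y - x from x to y, this forces f y - y \<le> f s - s - D/2 for every s \<le> x, i.e.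
the running minimum of f t - t drops by at least D/2. Hence the total descent of f is bounded by
b - a plus twice the oscillation of f t - t, and f has bounded variation.\<close>

lemma strict_linear_order_on_irrefl:
  "strict_linear_order_on X R \<Longrightarrow> x \<in> X \<Longrightarrow> \<not> R x x"
  by (simp add: strict_linear_order_on_def)

lemma strict_linear_order_on_trans:
  "strict_linear_order_on X R \<Longrightarrow> x \<in> X \<Longrightarrow> y \<in> X \<Longrightarrow> z \<in> X \<Longrightarrow> R x y \<Longrightarrow> R y z \<Longrightarrow> R x z"
  unfolding strict_linear_order_on_def by blast

lemma strict_linear_order_on_total:
  "strict_linear_order_on X R \<Longrightarrow> x \<in> X \<Longrightarrow> y \<in> X \<Longrightarrow> x \<noteq> y \<Longrightarrow> R x y \<or> R y x"
  unfolding strict_linear_order_on_def by blast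

lemma strict_linear_order_on_asym:
  assumes "strict_linear_order_on X R" "x \<in> X" "y \<in> X" "R x y"
  shows "\<not> R y x"
  using strict_linear_order_on_trans[OF assms(1,2,3,2) \<open>R x y\<close>]
    strict_linear_order_on_irrefl[OF assms(1,2)] by blast

lemma strict_linear_order_on_not_iff:
  assumes "strict_linear_order_on X R" "x \<in> X" "y \<in> X" "x \<noteq> y"
  shows "\<not> R x y \<longleftrightarrow> R y x"
  using strict_linear_order_on_total[OF assms] strict_linear_order_on_asym[OF assms(1,3,2)] by blast

lemma strict_linear_order_on_converse:
  assumes R: "strict_linear_order_on X R"
  shows "strict_linear_order_on X (\<lambda>x y. R y x)"
  unfolding strict_linear_order_on_def
proof (intro conjI ballI impI)
  fix x y z assume x: "x \<in> X" and y: "y \<in> X" and z: "z \<in> X"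
  show "\<not> R x x" by (rule strict_linear_order_on_irrefl[OF R x])
  show "R z x" if "R y x \<and> R z y"
    using strict_linear_order_on_trans[OF R z y x] that by blast
  show "R y x \<or> R x y" if "x \<noteq> y"
    using strict_linear_order_on_total[OF R x y that] by blast
qed

lemma strict_linear_order_on_pullback:
  assumes p: "inj_on p X" and R: "strict_linear_order_on (p ` X) R"
  shows "strict_linear_order_on X (\<lambda>x y. R (p x) (p y))"
  unfolding strict_linear_order_on_def
proof (intro conjI ballI impI)
  fix x y z assume x: "x \<in> X" and y: "y \<in> X" and z: "z \<in> X"
  show "\<not> R (p x) (p x)" using strict_linear_order_on_irrefl[OF R] x by simp
  show "R (p x) (p z)" if "R (p x) (p y) \<and> R (p y) (p z)"
    using strict_linear_order_on_trans[OF R, of "p x" "p y" "p z"] x y z that by simp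
  show "R (p x) (p y) \<or> R (p y) (p x)" if "x \<noteq> y"
    using strict_linear_order_on_total[OF R, of "p x" "p y"] inj_on_eq_iff[OF p x y] x y that by simp
qed

lemma monotone_order_sides_openin:
  fixes X :: "'a::metric_space set"
  assumes R: "strict_linear_order_on X R"
    and mono: "\<And>x y z. x \<in> X \<Longrightarrow> y \<in> X \<Longrightarrow> z \<in> X \<Longrightarrow> R x y \<Longrightarrow> R y z \<Longrightarrow> dist x y \<le> dist x z"
    and v: "v \<in> X"
  shows "openin (top_of_set X) {x \<in> X. R v x}" and "openin (top_of_set X) {x \<in> X. R x v}"
proof -
  have side_stable: "\<exists>e>0. \<forall>x'\<in>X. dist x' x < e \<longrightarrow> (if R v x then R v x' else R x' v)"
    if x: "x \<in> X" "x \<noteq> v" for x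
  proof (intro exI conjI ballI impI)
    show "dist v x / 2 > 0" using x by simp
    fix x' assume x': "x' \<in> X" "dist x' x < dist v x / 2"
    have "x' \<noteq> v" using x' by (auto simp: dist_commute)
    have tri: "dist v x \<le> dist v x' + dist x' x" by (rule dist_triangle)
    show "if R v x then R v x' else R x' v"
    proof (cases "R v x")
      case True
      have "\<not> R x' v"
      proof
        assume "R x' v"
        then have "dist x' v \<le> dist x' x" using mono[OF x'(1) v x(1)] True by blast
        with x' tri show False by (simp add: dist_commute)
      qed
      with True show ?thesis
        using strict_linear_order_on_not_iff[OF R x'(1) v \<open>x' \<noteq> v\<close>] by simp
    next
      case False
      then have "R x v" using strict_linear_order_on_not_iff[OF R v x(1)] x(2) by simp
      have "\<not> R v x'"
      proof
        assume "R v x'"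
        then have "dist v x \<le> dist x' x"
          using mono[OF x(1) v x'(1) \<open>R x v\<close>] by (simp add: dist_commute)
        with x'(2) zero_le_dist[of x' x] show False by linarith
      qed
      with False show ?thesis
        using strict_linear_order_on_not_iff[OF R v x'(1)] \<open>x' \<noteq> v\<close> by simp
    qed
  qed
  show "openin (top_of_set X) {x \<in> X. R v x}"
    unfolding openin_euclidean_subtopology_iff
  proof (intro conjI ballI)
    fix x assume x: "x \<in> {x \<in> X. R v x}"
    then have "x \<noteq> v" using strict_linear_order_on_irrefl[OF R v] by auto
    with x obtain e where "e > 0" "\<forall>x'\<in>X. dist x' x < e \<longrightarrow> R v x'"
      using side_stable[of x] by auto
    then show "\<exists>e>0. \<forall>x'\<in>X. dist x' x < e \<longrightarrow> x' \<in> {x \<in> X. R v x}" by auto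
  qed auto
  show "openin (top_of_set X) {x \<in> X. R x v}"
    unfolding openin_euclidean_subtopology_iff
  proof (intro conjI ballI)
    fix x assume x: "x \<in> {x \<in> X. R x v}"
    then have "x \<noteq> v" and "\<not> R v x"
      using strict_linear_order_on_irrefl[OF R v] strict_linear_order_on_asym[OF R] v by auto
    with x obtain e where "e > 0" "\<forall>x'\<in>X. dist x' x < e \<longrightarrow> R x' v"
      using side_stable[of x] by auto
    then show "\<exists>e>0. \<forall>x'\<in>X. dist x' x < e \<longrightarrow> x' \<in> {x \<in> X. R x v}" by auto
  qed auto
qed

lemma monotone_order_side_constant_on_connected:
  fixes X :: "'a::metric_space set"
  assumes R: "strict_linear_order_on X R"
    and mono: "\<And>x y z. x \<in> X \<Longrightarrow> y \<in> X \<Longrightarrow> z \<in> X \<Longrightarrow> R x y \<Longrightarrow> R y z \<Longrightarrow> dist x y \<le> dist x z"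
    and v: "v \<in> X" and C: "connected C" "C \<subseteq> X - {v}"
    and x: "x \<in> C" and y: "y \<in> C" and "R v x"
  shows "R v y"
proof -
  obtain U where U: "open U" "{z \<in> X. R v z} = X \<inter> U"
    using monotone_order_sides_openin(1)[OF R mono v] unfolding openin_open by blast
  obtain V where V: "open V" "{z \<in> X. R z v} = X \<inter> V"
    using monotone_order_sides_openin(2)[OF R mono v] unfolding openin_open by blast
  have "U \<inter> V \<inter> C = {}"
    using U(2) V(2) C(2) strict_linear_order_on_asym[OF R v] by blast
  moreover have "C \<subseteq> U \<union> V"
    using U(2) V(2) C(2) strict_linear_order_on_total[OF R v] by blast
  ultimately have "U \<inter> C = {} \<or> V \<inter> C = {}"
    using connectedD[OF C(1) U(1) V(1)] by blast
  moreover have "x \<in> U" using U(2) x C(2) \<open>R v x\<close> by blast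
  ultimately have "y \<notin> V" using x y by blast
  then show ?thesis
    using V(2) y C(2) strict_linear_order_on_not_iff[OF R v] by blast
qed

lemma interval_order_increasing:
  fixes r :: "real \<Rightarrow> real \<Rightarrow> bool"
  assumes r: "strict_linear_order_on {a..b} r"
    and side: "\<And>v x y. v \<in> {a..b} \<Longrightarrow> x \<in> {a..b} \<Longrightarrow> y \<in> {a..b} \<Longrightarrow>
                 x < v \<and> y < v \<or> v < x \<and> v < y \<Longrightarrow> r v x \<Longrightarrow> r v y"
    and "r a b"
  shows "\<forall>x\<in>{a..b}. \<forall>y\<in>{a..b}. x < y \<longrightarrow> r x y"
proof (intro ballI impI)
  fix x y assume x: "x \<in> {a..b}" and y: "y \<in> {a..b}" and "x < y"
  have from_a: "r a z" if "z \<in> {a<..b}" for z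
    using side[of a b z] \<open>r a b\<close> that by auto
  show "r x y"
  proof (cases "x = a")
    case True
    then show ?thesis using from_a y \<open>x < y\<close> by auto
  next
    case False
    then have "a < x" using x by auto
    have "\<not> r y x"
    proof
      assume "r y x"
      then have "r y a" using side[of y x a] x y \<open>a < x\<close> \<open>x < y\<close> by auto
      moreover have "r a y" using from_a y \<open>a < x\<close> \<open>x < y\<close> by auto
      ultimately show False
        using strict_linear_order_on_asym[OF r, of a y] y \<open>a < x\<close> by auto
    qed
    then show ?thesis
      using strict_linear_order_on_not_iff[OF r y x] \<open>x < y\<close> by simp
  qed
qed

lemma interval_order_monotone_cases:
  fixes r :: "real \<Rightarrow> real \<Rightarrow> bool"
  assumes r: "strict_linear_order_on {a..b} r"
    and side: "\<And>v x y. v \<in> {a..b} \<Longrightarrow> x \<in> {a..b} \<Longrightarrow> y \<in> {a..b} \<Longrightarrow>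
                 x < v \<and> y < v \<or> v < x \<and> v < y \<Longrightarrow> r v x \<Longrightarrow> r v y"
  shows "(\<forall>x\<in>{a..b}. \<forall>y\<in>{a..b}. x < y \<longrightarrow> r x y) \<or> (\<forall>x\<in>{a..b}. \<forall>y\<in>{a..b}. x < y \<longrightarrow> r y x)"
proof (cases "a < b")
  case False
  then show ?thesis by auto
next
  case True
  then consider "r a b" | "r b a"
    using strict_linear_order_on_total[OF r, of a b] by auto
  then show ?thesis
  proof cases
    case 1
    show ?thesis
      by (intro disjI1 interval_order_increasing[OF r]) (fact side, fact 1)
  next
    case 2
    have side': "r y v"
      if "v \<in> {a..b}" "x \<in> {a..b}" "y \<in> {a..b}" "x < v \<and> y < v \<or> v < x \<and> v < y" "r x v"
      for v x y
    proof (rule ccontr)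
      assume "\<not> r y v"
      then have "r v y" using strict_linear_order_on_not_iff[OF r, of y v] that by auto
      then show False
        using side[of v y x] strict_linear_order_on_asym[OF r, of v x] that by blast
    qed
    show ?thesis
      by (intro disjI2 interval_order_increasing[OF strict_linear_order_on_converse[OF r]])
        (fact side', fact 2)
  qed
qed

lemma monotone_order_on_arc:
  fixes p :: "real \<Rightarrow> 'a::metric_space"
  assumes p: "continuous_on {a..b} p" "inj_on p {a..b}"
    and R: "strict_linear_order_on (p ` {a..b}) R"
    and mono: "\<And>x y z. x \<in> p ` {a..b} \<Longrightarrow> y \<in> p ` {a..b} \<Longrightarrow> z \<in> p ` {a..b} \<Longrightarrow>
                 R x y \<Longrightarrow> R y z \<Longrightarrow> dist x y \<le> dist x z"
  shows "(\<forall>x\<in>{a..b}. \<forall>y\<in>{a..b}. x < y \<longrightarrow> R (p x) (p y)) \<or>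
         (\<forall>x\<in>{a..b}. \<forall>y\<in>{a..b}. x < y \<longrightarrow> R (p y) (p x))"
proof (rule interval_order_monotone_cases[OF strict_linear_order_on_pullback[OF p(2) R]])
  fix v x y
  assume v: "v \<in> {a..b}" and x: "x \<in> {a..b}" and y: "y \<in> {a..b}"
    and side: "x < v \<and> y < v \<or> v < x \<and> v < y" and "R (p v) (p x)"
  let ?C = "p ` {min x y..max x y}"
  have "connected ?C"
    using x y by (intro connected_continuous_image continuous_on_subset[OF p(1)]) auto
  moreover have "?C \<subseteq> p ` {a..b} - {p v}"
  proof
    fix q assume "q \<in> ?C"
    then obtain z where z: "z \<in> {min x y..max x y}" "q = p z" by auto
    have "z \<in> {a..b}" "z \<noteq> v" using z(1) x y side by auto
    then show "q \<in> p ` {a..b} - {p v}" using z(2) v inj_on_eq_iff[OF p(2)] by auto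
  qed
  moreover have "p v \<in> p ` {a..b}" "p x \<in> ?C" "p y \<in> ?C" using v by auto
  ultimately show "R (p v) (p y)"
    using monotone_order_side_constant_on_connected[OF R mono, of "p v" ?C "p x" "p y"]
      \<open>R (p v) (p x)\<close> by blast
qed

lemma bounded_variation_on_reflect:
  assumes "bounded_variation_on (\<lambda>x. f (- x)) (- b) (- a)"
  shows "bounded_variation_on f a b"
proof -
  obtain M where M: "\<And>n t. t 0 = - b \<Longrightarrow> t n = - a \<Longrightarrow> \<forall>i<n. t i < t (Suc i) \<Longrightarrow>
                        (\<Sum>i<n. \<bar>f (- t (Suc i)) - f (- t i)\<bar>) \<le> M"
    using assms unfolding bounded_variation_on_def by blast
  show ?thesis
    unfolding bounded_variation_on_def
  proof (intro exI allI impI)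
    fix n and t :: "nat \<Rightarrow> real"
    assume t: "t 0 = a \<and> t n = b \<and> (\<forall>i<n. t i < t (Suc i))"
    define t' where "t' i = - t (n - i)" for i
    have rev: "n - i = Suc (n - Suc i)" if "i < n" for i
      using that by simp
    have "(\<Sum>i<n. \<bar>f (t (Suc i)) - f (t i)\<bar>) = (\<Sum>i<n. \<bar>f (- t' (Suc i)) - f (- t' i)\<bar>)"
      by (subst sum.nat_diff_reindex[symmetric], rule sum.cong)
        (auto simp: t'_def rev abs_minus_commute)
    also have "\<dots> \<le> M"
      by (rule M) (use t rev in \<open>auto simp: t'_def\<close>)
    finally show "(\<Sum>i<n. \<bar>f (t (Suc i)) - f (t i)\<bar>) \<le> M" .
  qed
qed

lemma rise_bound_of_sum_squares_le:
  fixes L h \<delta> D :: real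
  assumes "L \<ge> 0" "\<delta> > 0" "D > \<delta>"
    and "L\<^sup>2 + h\<^sup>2 \<le> (L + \<delta>)\<^sup>2 + (h - D)\<^sup>2"
  shows "h - L \<le> D / 2 + \<delta>"
proof (rule ccontr)
  assume "\<not> ?thesis"
  then have h: "2 * h - D > 2 * L + 2 * \<delta>" by simp
  have expand: "2 * h * D - D\<^sup>2 \<le> 2 * L * \<delta> + \<delta>\<^sup>2"
    using assms(4) by (simp add: power2_eq_square algebra_simps)
  have "D * (2 * h - D) \<ge> D * (2 * L + 2 * \<delta>)"
    using h assms by (intro mult_left_mono) auto
  moreover have "D * (2 * L + 2 * \<delta>) \<ge> \<delta> * (2 * L + 2 * \<delta>)"
    using assms by (intro mult_right_mono) auto
  ultimately have "2 * h * D - D\<^sup>2 \<ge> \<delta> * (2 * L + 2 * \<delta>)"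
    by (simp add: algebra_simps power2_eq_square)
  moreover have "\<delta> * \<delta> > 0" using assms by simp
  ultimately show False using expand by (simp add: algebra_simps power2_eq_square)
qed

lemma increasing_monotone_graph_descent:
  fixes f :: "real \<Rightarrow> real"
  assumes mono: "\<And>s t u. a \<le> s \<Longrightarrow> s < t \<Longrightarrow> t < u \<Longrightarrow> u \<le> b \<Longrightarrow>
                   dist (s, f s) (t, f t) \<le> dist (s, f s) (u, f u)"
    and "a \<le> s" "s \<le> x" "x < y" "y \<le> b" and descent: "y - x < f x - f y"
  shows "f y - y \<le> f s - s - (f x - f y) / 2"
proof (cases "s = x")
  case True
  then show ?thesis using descent \<open>x < y\<close> by (simp add: field_simps)
next
  case False
  have "dist (s, f s) (x, f x) \<le> dist (s, f s) (y, f y)"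
    using mono assms False by simp
  then have "(x - s)\<^sup>2 + (f x - f s)\<^sup>2 \<le> ((x - s) + (y - x))\<^sup>2 + ((f x - f s) - (f x - f y))\<^sup>2"
    by (simp add: dist_Pair_Pair dist_real_def power2_commute)
  then have "(f x - f s) - (x - s) \<le> (f x - f y) / 2 + (y - x)"
    using assms by (intro rise_bound_of_sum_squares_le) auto
  then show ?thesis by (simp add: field_simps)
qed

lemma partition_variation_le_descent_potential:
  fixes f m t :: "_ \<Rightarrow> real"
  assumes t: "t 0 = a" "t n = b"
    and step: "\<And>i. i < n \<Longrightarrow>
      max 0 (f (t i) - f (t (Suc i))) \<le> t (Suc i) - t i + 2 * (m (t i) - m (t (Suc i)))"
  shows "(\<Sum>i<n. \<bar>f (t (Suc i)) - f (t i)\<bar>) \<le> f b - f a + 2 * (b - a) + 4 * (m a - m b)"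
proof -
  have "\<bar>f (t (Suc i)) - f (t i)\<bar> = (f (t (Suc i)) - f (t i)) + 2 * max 0 (f (t i) - f (t (Suc i)))"
    for i by (simp add: abs_if max_def)
  then have "(\<Sum>i<n. \<bar>f (t (Suc i)) - f (t i)\<bar>) =
      (\<Sum>i<n. f (t (Suc i)) - f (t i)) + 2 * (\<Sum>i<n. max 0 (f (t i) - f (t (Suc i))))"
    by (simp add: sum.distrib sum_distrib_left)
  also have "(\<Sum>i<n. f (t (Suc i)) - f (t i)) = f b - f a"
    using sum_lessThan_telescope[of "\<lambda>i. f (t i)" n] t by simp
  also have "(\<Sum>i<n. max 0 (f (t i) - f (t (Suc i)))) \<le>
      (\<Sum>i<n. t (Suc i) - t i + 2 * (m (t i) - m (t (Suc i))))"
    using step by (intro sum_mono) auto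
  also have "\<dots> = (b - a) + 2 * (m a - m b)"
    using sum_lessThan_telescope[of t n] sum_lessThan_telescope'[of "\<lambda>i. m (t i)" n] t
    by (simp only: sum.distrib sum_distrib_left[symmetric])
  finally show ?thesis by simp
qed

lemma increasing_monotone_graph_bounded_variation:
  fixes f :: "real \<Rightarrow> real"
  assumes mono: "\<And>s t u. a \<le> s \<Longrightarrow> s < t \<Longrightarrow> t < u \<Longrightarrow> u \<le> b \<Longrightarrow>
                   dist (s, f s) (t, f t) \<le> dist (s, f s) (u, f u)"
  shows "bounded_variation_on f a b"
proof -
  define K where "K = dist (a, f a) (b, f b)"
  have near_a: "\<bar>f x - f a\<bar> \<le> K" if "a \<le> x" "x \<le> b" for x
  proof -
    have "dist (a, f a) (x, f x) \<le> K"
    proof (cases "a < x \<and> x < b")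
      case True
      then show ?thesis using mono[of a x b] by (simp add: K_def)
    next
      case False
      then have "x = a \<or> x = b" using that by auto
      then show ?thesis by (auto simp: K_def)
    qed
    then show ?thesis
      using dist_snd_le[of "(a, f a)" "(x, f x)"] by (simp add: dist_real_def abs_minus_commute)
  qed
  define m where "m x = Inf ((\<lambda>y. f y - y) ` {a..x})" for x
  have bdd: "bdd_below ((\<lambda>y. f y - y) ` {a..x})" if "x \<le> b" for x
    using near_a that by (intro bdd_belowI2[where m = "f a - K - b"]) force
  have m_le: "m x \<le> f y - y" if "a \<le> y" "y \<le> x" "x \<le> b" for x y
    unfolding m_def using that bdd by (intro cInf_lower) auto
  have m_ge: "c \<le> m x" if "a \<le> x" "\<And>y. a \<le> y \<Longrightarrow> y \<le> x \<Longrightarrow> c \<le> f y - y" for x c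
    unfolding m_def using that by (intro cInf_greatest) auto
  have m_antimono: "m y \<le> m x" if "a \<le> x" "x \<le> y" "y \<le> b" for x y
    unfolding m_def using that bdd[of y] by (intro cInf_superset_mono) auto
  have step: "max 0 (f x - f y) \<le> y - x + 2 * (m x - m y)" if xy: "a \<le> x" "x < y" "y \<le> b" for x y
  proof (cases "f x - f y \<le> y - x")
    case True
    then show ?thesis using m_antimono[of x y] xy by simp
  next
    case False
    have "f y - y + (f x - f y) / 2 \<le> m x"
    proof (rule m_ge)
      fix s assume "a \<le> s" "s \<le> x"
      with xy False have "f y - y \<le> f s - s - (f x - f y) / 2"
        by (intro increasing_monotone_graph_descent[OF mono]) auto
      then show "f y - y + (f x - f y) / 2 \<le> f s - s" by simp
    qed (use xy in simp)
    moreover have "m y \<le> f y - y" using m_le[of y y] xy by simp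
    ultimately have descent: "f x - f y \<le> y - x + 2 * (m x - m y)" using xy by argo
    moreover have "0 \<le> y - x + 2 * (m x - m y)" using descent False xy by argo
    ultimately show ?thesis by (intro max.boundedI)
  qed
  show ?thesis
    unfolding bounded_variation_on_def
  proof (intro exI allI impI)
    fix n and t :: "nat \<Rightarrow> real"
    assume t: "t 0 = a \<and> t n = b \<and> (\<forall>i<n. t i < t (Suc i))"
    have t_le: "t i \<le> t j" if "i \<le> j" "j \<le> n" for i j
      using lift_Suc_mono_le_ivl[of "{..<n}" t i j] t that by (simp add: less_imp_le subset_eq)
    have t_in: "a \<le> t i \<and> t i \<le> b" if "i \<le> n" for i
      using t_le[of 0 i] t_le[of i n] that t by simp
    have ab: "a \<le> b" using t_in[of n] t by simp
    have "(\<Sum>i<n. \<bar>f (t (Suc i)) - f (t i)\<bar>) \<le> f b - f a + 2 * (b - a) + 4 * (m a - m b)"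
    proof (rule partition_variation_le_descent_potential)
      fix i assume "i < n"
      then have "a \<le> t i" "t i < t (Suc i)" "t (Suc i) \<le> b"
        using t_in[of i] t_in[of "Suc i"] t by simp_all
      then show "max 0 (f (t i) - f (t (Suc i))) \<le> t (Suc i) - t i + 2 * (m (t i) - m (t (Suc i)))"
        by (rule step)
    qed (use t in simp_all)
    also have "\<dots> \<le> 5 * K + 6 * (b - a)"
    proof -
      have "m a = f a - a" unfolding m_def by simp
      moreover have "f a - K - b \<le> m b"
      proof (rule m_ge)
        fix y assume "a \<le> y" "y \<le> b"
        then show "f a - K - b \<le> f y - y" using near_a[of y] by simp
      qed (rule ab)
      moreover have "f b - f a \<le> K" using near_a[of b] ab by simp
      ultimately show ?thesis by argo
    qed
    finally show "(\<Sum>i<n. \<bar>f (t (Suc i)) - f (t i)\<bar>) \<le> 5 * K + 6 * (b - a)" .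
  qed
qed

lemma decreasing_monotone_graph_bounded_variation:
  fixes f :: "real \<Rightarrow> real"
  assumes mono: "\<And>s t u. a \<le> s \<Longrightarrow> s < t \<Longrightarrow> t < u \<Longrightarrow> u \<le> b \<Longrightarrow>
                   dist (u, f u) (t, f t) \<le> dist (u, f u) (s, f s)"
  shows "bounded_variation_on f a b"
proof (rule bounded_variation_on_reflect, rule increasing_monotone_graph_bounded_variation)
  fix s t u assume "- b \<le> s" "s < t" "t < u" "u \<le> - a"
  then have "dist (- s, f (- s)) (- t, f (- t)) \<le> dist (- s, f (- s)) (- u, f (- u))"
    using mono[of "- u" "- t" "- s"] by simp
  then show "dist (s, f (- s)) (t, f (- t)) \<le> dist (s, f (- s)) (u, f (- u))"
    by (simp add: dist_Pair_Pair dist_real_def abs_minus_commute)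
qed

theorem theorem6p5:
  fixes a b :: real and f :: "real \<Rightarrow> real"
  assumes "a < b"
    and "continuous_on {a..b} f"
    and "c_monotone 1 (graph_on {a..b} f)"
  shows "bounded_variation_on f a b"
proof -
  define p where "p x = (x, f x)" for x
  have graph: "graph_on {a..b} f = p ` {a..b}"
    by (auto simp: graph_on_def p_def)
  obtain R where R: "strict_linear_order_on (p ` {a..b}) R"
    and one_monotone: "\<forall>x\<in>p ` {a..b}. \<forall>y\<in>p ` {a..b}. \<forall>z\<in>p ` {a..b}.
                  R x y \<and> R y z \<longrightarrow> dist x y \<le> 1 * dist x z"
    using assms(3) unfolding c_monotone_def graph by blast
  from one_monotone have mono: "\<And>x y z. x \<in> p ` {a..b} \<Longrightarrow> y \<in> p ` {a..b} \<Longrightarrow> z \<in> p ` {a..b} \<Longrightarrow>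
                 R x y \<Longrightarrow> R y z \<Longrightarrow> dist x y \<le> dist x z"
    unfolding mult_1 by blast
  have "continuous_on {a..b} p" unfolding p_def by (intro continuous_intros assms(2))
  moreover have "inj_on p {a..b}" by (simp add: inj_on_def p_def)
  ultimately consider
      (increasing) "\<forall>x\<in>{a..b}. \<forall>y\<in>{a..b}. x < y \<longrightarrow> R (p x) (p y)"
    | (decreasing) "\<forall>x\<in>{a..b}. \<forall>y\<in>{a..b}. x < y \<longrightarrow> R (p y) (p x)"
    using monotone_order_on_arc[OF _ _ R mono] by blast
  then show ?thesis
  proof cases
    case increasing
    show ?thesis
    proof (rule increasing_monotone_graph_bounded_variation)
      fix s t u assume "a \<le> s" "s < t" "t < u" "u \<le> b"
      with increasing show "dist (s, f s) (t, f t) \<le> dist (s, f s) (u, f u)"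
        using mono[of "p s" "p t" "p u"] by (simp add: p_def)
    qed
  next
    case decreasing
    show ?thesis
    proof (rule decreasing_monotone_graph_bounded_variation)
      fix s t u assume "a \<le> s" "s < t" "t < u" "u \<le> b"
      with decreasing show "dist (u, f u) (t, f t) \<le> dist (u, f u) (s, f s)"
        using mono[of "p u" "p t" "p s"] by (simp add: p_def)
    qed
  qed
qed

end
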